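(* Let $(\mathcal S,\mathcal A,P,r)$ be any finite MDP (general/multichain) and let $(g^\star,h^\star)$ be a solution of the modified Bellman equations. Let $V^0\in\mathbb R^n$ and let $V^k=\lambda_kV^0+(1-\lambda_k)TV^{k-1}$ for $k\ge1$ with $\lambda_k=\frac{2}{k+2}$ (Anchored Value Iteration), and for each $k$ let $\pi_k$ be a greedy policy, i.e. $T^{\pi_k}V^k=TV^k$. Let $\mathcal D$ be the set of all deterministic policies, \[\epsilon=\inf_{\pi\in\mathcal D\setminus\{\pi\,:\,\mathcal P^{\pi}g^\star=g^\star\}}\|\mathcal P^{\pi}g^\star-g^\star\|_\infty\in(0,\infty]\] (with $\epsilon=+\infty$ if the index set is empty), and $K=\big(3\|r\|_\infty+12\|V^0-h^\star\|_\infty+3\|g^\star\|_\infty\big)/\epsilon$. Then for every $k>K$, \[\|g^\star-g^{\pi_k}\|_\infty\le\|TV^k-V^k-g^\star\|_\infty\le\frac{8}{k+1}\|V^0-h^\star\|_\infty+\frac{K}{k+1}\|g^\star\|_\infty.\]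
   Context: An MDP $(\mathcal S,\mathcal A,P,r)$ has finite state space $\mathcal S$ with $|\mathcal S|=n$ (functions on $\mathcal S$ are identified with vectors in $\mathbb R^n$), finite action space $\mathcal A$, transition probabilities $P(s'\mid s,a)$ and bounded reward $r$, $\|r\|_\infty=\max_{s,a}|r(s,a)|$. A policy $\pi$ assigns to each state a distribution $\pi(\cdot\mid s)$ on $\mathcal A$; $r^\pi(s)=\sum_a\pi(a\mid s)r(s,a)$, $\mathcal P^\pi(s,s')=\sum_a\pi(a\mid s)P(s'\mid s,a)$. Average reward: $g^\pi(s)=\liminf_{T\to\infty}\frac1T\mathbb E_\pi[\sum_{t=0}^{T-1}r(s_t,a_t)\mid s_0=s]$, $g^\star(s)=\max_\pi g^\pi(s)$. $T^\pi V=r^\pi+\mathcal P^\pi V$; $(TV)(s)=\max_a\{r(s,a)+\sum_{s'}P(s'\mid s,a)V(s')\}$. A pair $(g,h)$ solves the modified Bellman equations if $\max_a\sum_{s'}P(s'\mid s,a)g(s')=g(s)$ and $\max_a\{r(s,a)+\sum_{s'}P(s'\mid s,a)h(s')\}=h(s)+g(s)$ for all $s$, with some policy attaining both maxima simultaneously; solutions exist and the first component of any solution equals $g^\star$. A policy is deterministic if each $\pi(\cdot\mid s)$ is a point mass. *)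

theory Defs
  imports "HOL-Analysis.Analysis"
begin

definition is_mdp :: "('s::finite \<Rightarrow> 'a::finite \<Rightarrow> 's \<Rightarrow> real) \<Rightarrow> bool" where
  "is_mdp P \<longleftrightarrow> (\<forall>s a s'. 0 \<le> P s a s') \<and> (\<forall>s a. (\<Sum>s'\<in>UNIV. P s a s') = 1)"

text \<open>A (randomized, stationary) policy: pol s a = probability of action a in state s.\<close>
definition is_policy :: "('s::finite \<Rightarrow> 'a::finite \<Rightarrow> real) \<Rightarrow> bool" where
  "is_policy pol \<longleftrightarrow> (\<forall>s a. 0 \<le> pol s a) \<and> (\<forall>s. (\<Sum>a\<in>UNIV. pol s a) = 1)"

definition deterministic_policies :: "('s::finite \<Rightarrow> 'a::finite \<Rightarrow> real) set" where
  "deterministic_policies = {pol. \<forall>s. \<exists>a. \<forall>b. pol s b = (if b = a then 1 else 0)}"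

definition sup_norm :: "('s::finite \<Rightarrow> real) \<Rightarrow> real" where
  "sup_norm V = Max (range (\<lambda>s. \<bar>V s\<bar>))"

definition reward_norm :: "('s::finite \<Rightarrow> 'a::finite \<Rightarrow> real) \<Rightarrow> real" where
  "reward_norm r = Max (range (\<lambda>(s,a). \<bar>r s a\<bar>))"

definition r_pol :: "('s::finite \<Rightarrow> 'a::finite \<Rightarrow> real) \<Rightarrow> ('s \<Rightarrow> 'a \<Rightarrow> real) \<Rightarrow> 's \<Rightarrow> real" where
  "r_pol r pol s = (\<Sum>a\<in>UNIV. pol s a * r s a)"

definition P_pol :: "('s::finite \<Rightarrow> 'a::finite \<Rightarrow> 's \<Rightarrow> real) \<Rightarrow> ('s \<Rightarrow> 'a \<Rightarrow> real) \<Rightarrow> ('s \<Rightarrow> real) \<Rightarrow> 's \<Rightarrow> real" where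
  "P_pol P pol V s = (\<Sum>s'\<in>UNIV. (\<Sum>a\<in>UNIV. pol s a * P s a s') * V s')"

definition T_pol where
  "T_pol P r pol V s = r_pol r pol s + P_pol P pol V s"

definition bellman_T :: "('s::finite \<Rightarrow> 'a::finite \<Rightarrow> 's \<Rightarrow> real) \<Rightarrow> ('s \<Rightarrow> 'a \<Rightarrow> real) \<Rightarrow> ('s \<Rightarrow> real) \<Rightarrow> 's \<Rightarrow> real" where
  "bellman_T P r V s = Max (range (\<lambda>a. r s a + (\<Sum>s'\<in>UNIV. P s a s' * V s')))"

text \<open>Average reward of policy pol: liminf over T of (1/T) sum_{t<T} E[r(s_t,a_t) | s_0 = s],
  where E_pi[r(s_t,a_t) | s_0 = s] = ((P^pol)^t r^pol)(s). The average is bounded,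
  so the liminf (taken in ereal) is finite.\<close>
definition gain :: "('s::finite \<Rightarrow> 'a::finite \<Rightarrow> 's \<Rightarrow> real) \<Rightarrow> ('s \<Rightarrow> 'a \<Rightarrow> real) \<Rightarrow> ('s \<Rightarrow> 'a \<Rightarrow> real) \<Rightarrow> 's \<Rightarrow> real" where
  "gain P r pol s = real_of_ereal (liminf (\<lambda>T::nat. ereal ((1 / real T) *
      (\<Sum>t<T. ((P_pol P pol ^^ t) (r_pol r pol)) s))))"

definition modified_bellman :: "('s::finite \<Rightarrow> 'a::finite \<Rightarrow> 's \<Rightarrow> real) \<Rightarrow> ('s \<Rightarrow> 'a \<Rightarrow> real) \<Rightarrow> ('s \<Rightarrow> real) \<Rightarrow> ('s \<Rightarrow> real) \<Rightarrow> bool" where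
  "modified_bellman P r g h \<longleftrightarrow>
     (\<forall>s. Max (range (\<lambda>a. \<Sum>s'\<in>UNIV. P s a s' * g s')) = g s) \<and>
     (\<forall>s. bellman_T P r h s = h s + g s) \<and>
     (\<exists>pol. is_policy pol \<and> (\<forall>s. P_pol P pol g s = g s) \<and> (\<forall>s. T_pol P r pol h s = h s + g s))"

primrec anchored_VI :: "('s::finite \<Rightarrow> 'a::finite \<Rightarrow> 's \<Rightarrow> real) \<Rightarrow> ('s \<Rightarrow> 'a \<Rightarrow> real) \<Rightarrow> ('s \<Rightarrow> real) \<Rightarrow> nat \<Rightarrow> 's \<Rightarrow> real" where
  "anchored_VI P r V0 0 = V0"
| "anchored_VI P r V0 (Suc k) = (\<lambda>s. (2 / (real (Suc k) + 2)) * V0 s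
      + (1 - 2 / (real (Suc k) + 2)) * bellman_T P r (anchored_VI P r V0 k) s)"

definition gap_eps :: "('s::finite \<Rightarrow> 'a::finite \<Rightarrow> 's \<Rightarrow> real) \<Rightarrow> ('s \<Rightarrow> real) \<Rightarrow> ereal" where
  "gap_eps P g = (INF pol \<in> {pol \<in> deterministic_policies. P_pol P pol g \<noteq> g}.
        ereal (sup_norm (\<lambda>s. P_pol P pol g s - g s)))"

end

theory Submission
  imports Defs
begin

(* Write V^k = h + (k/3) g + U^k.  Because T (h + c g) = h + (c + 1) g for c >= 0 and T is
   nonexpansive, the anchoring keeps ||U^k|| <= ||V^0 - h||.  Hence an action that is greedy for
   V^k but has P g < g loses k/3 times its gap against T V^k, which is impossible once
   k > 6 ||V^0 - h|| / epsilon: from then on every greedy action preserves g, and the differences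
   V^(k+1) - V^k - g/3 satisfy a recursion that makes them decay like 1/k.  Before that time they
   are only bounded up to an error 2||g||/3, which is what the term K ||g|| pays for.  The Bellman
   residual T V^k - V^k - g is an explicit combination of V^(k+1) - V^k - g/3 and U^k.  Finally,
   for a policy with P^pi g = g the Cesaro averages defining its gain telescope, so its gain is
   within ||T^pi V - V - g|| of g for every V. *)

definition prob_vector :: "('x::finite \<Rightarrow> real) \<Rightarrow> bool" where
  "prob_vector w \<longleftrightarrow> (\<forall>x. 0 \<le> w x) \<and> sum w UNIV = 1"

lemma prob_vector_sum_le:
  assumes "prob_vector w" and "\<And>x. V x \<le> c"
  shows "(\<Sum>x\<in>UNIV. w x * V x) \<le> c"
proof -
  have "(\<Sum>x\<in>UNIV. w x * V x) \<le> (\<Sum>x\<in>UNIV. w x * c)"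
    using assms by (intro sum_mono mult_left_mono) (auto simp: prob_vector_def)
  also have "\<dots> = c"
    using assms(1) by (simp add: prob_vector_def flip: sum_distrib_right)
  finally show ?thesis .
qed

lemma prob_vector_sum_ge:
  assumes "prob_vector w" and "\<And>x. c \<le> V x"
  shows "c \<le> (\<Sum>x\<in>UNIV. w x * V x)"
  using prob_vector_sum_le[OF assms(1), of "\<lambda>x. - V x" "- c"] assms(2) by (simp add: sum_negf)

lemma prob_vector_sum_abs_le:
  assumes "prob_vector w" and "\<And>x. \<bar>V x\<bar> \<le> c"
  shows "\<bar>\<Sum>x\<in>UNIV. w x * V x\<bar> \<le> c"
proof -
  have "- c \<le> V x" and "V x \<le> c" for x
    using assms(2)[of x] by (simp_all add: abs_le_iff)
  then have "- c \<le> (\<Sum>x\<in>UNIV. w x * V x)" and "(\<Sum>x\<in>UNIV. w x * V x) \<le> c"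
    by (metis prob_vector_sum_ge[OF assms(1)], metis prob_vector_sum_le[OF assms(1)])
  then show ?thesis by (simp add: abs_le_iff)
qed

lemma is_mdp_prob_vector: "is_mdp P \<Longrightarrow> prob_vector (P s a)"
  unfolding is_mdp_def prob_vector_def by blast

lemma is_policy_prob_vector: "is_policy pol \<Longrightarrow> prob_vector (pol s)"
  unfolding is_policy_def prob_vector_def by blast

lemma abs_le_sup_norm: "\<bar>V s\<bar> \<le> sup_norm V"
  unfolding sup_norm_def by (rule Max_ge) auto

lemma sup_norm_le: "(\<And>s. \<bar>V s\<bar> \<le> c) \<Longrightarrow> sup_norm V \<le> c"
  unfolding sup_norm_def by (subst Max_le_iff) auto

lemma sup_norm_nonneg: "0 \<le> sup_norm V"
  using abs_le_sup_norm[of V undefined] by linarith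

lemma abs_le_reward_norm: "\<bar>r s a\<bar> \<le> reward_norm r"
  unfolding reward_norm_def by (rule Max_ge) auto

definition P_sa :: "('s::finite \<Rightarrow> 'a \<Rightarrow> 's \<Rightarrow> real) \<Rightarrow> 's \<Rightarrow> 'a \<Rightarrow> ('s \<Rightarrow> real) \<Rightarrow> real" where
  "P_sa P s a V = (\<Sum>s'\<in>UNIV. P s a s' * V s')"

lemma P_sa_add: "P_sa P s a (\<lambda>x. V x + W x) = P_sa P s a V + P_sa P s a W"
  unfolding P_sa_def by (simp add: distrib_left sum.distrib)

lemma P_sa_diff: "P_sa P s a (\<lambda>x. V x - W x) = P_sa P s a V - P_sa P s a W"
  unfolding P_sa_def by (simp add: right_diff_distrib sum_subtractf)

lemma P_sa_cmult: "P_sa P s a (\<lambda>x. c * V x) = c * P_sa P s a V"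
  unfolding P_sa_def by (simp add: sum_distrib_left mult.left_commute)

lemma P_sa_le: "is_mdp P \<Longrightarrow> (\<And>x. V x \<le> c) \<Longrightarrow> P_sa P s a V \<le> c"
  unfolding P_sa_def by (rule prob_vector_sum_le[OF is_mdp_prob_vector])

lemma P_sa_ge: "is_mdp P \<Longrightarrow> (\<And>x. c \<le> V x) \<Longrightarrow> c \<le> P_sa P s a V"
  unfolding P_sa_def by (rule prob_vector_sum_ge[OF is_mdp_prob_vector])

lemma P_pol_eq_sum_P_sa: "P_pol P pol V s = (\<Sum>a\<in>UNIV. pol s a * P_sa P s a V)"
proof -
  have "P_pol P pol V s = (\<Sum>s'\<in>UNIV. \<Sum>a\<in>UNIV. pol s a * (P s a s' * V s'))"
    unfolding P_pol_def by (simp add: sum_distrib_right mult.assoc)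
  also have "\<dots> = (\<Sum>a\<in>UNIV. pol s a * P_sa P s a V)"
    unfolding P_sa_def by (subst sum.swap) (simp add: sum_distrib_left)
  finally show ?thesis .
qed

lemma T_pol_eq_sum: "T_pol P r pol V s = (\<Sum>a\<in>UNIV. pol s a * (r s a + P_sa P s a V))"
  unfolding T_pol_def r_pol_def P_pol_eq_sum_P_sa by (simp add: distrib_left sum.distrib)

lemma P_pol_add: "P_pol P pol (\<lambda>x. V x + W x) = (\<lambda>s. P_pol P pol V s + P_pol P pol W s)"
  unfolding P_pol_def by (simp add: distrib_left sum.distrib)

lemma P_pol_diff: "P_pol P pol (\<lambda>x. V x - W x) = (\<lambda>s. P_pol P pol V s - P_pol P pol W s)"
  unfolding P_pol_def by (simp add: right_diff_distrib sum_subtractf)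

lemma P_pol_cmult: "P_pol P pol (\<lambda>x. c * V x) = (\<lambda>s. c * P_pol P pol V s)"
  unfolding P_pol_def by (simp add: sum_distrib_left mult.left_commute)

lemma prob_vector_P_pol_row:
  assumes "is_mdp P" and "is_policy pol"
  shows "prob_vector (\<lambda>s'. \<Sum>a\<in>UNIV. pol s a * P s a s')"
  unfolding prob_vector_def
proof (intro conjI allI)
  show "0 \<le> (\<Sum>a\<in>UNIV. pol s a * P s a s')" for s'
    using assms by (intro sum_nonneg mult_nonneg_nonneg) (auto simp: is_mdp_def is_policy_def)
  have "(\<Sum>s'\<in>UNIV. \<Sum>a\<in>UNIV. pol s a * P s a s') = (\<Sum>a\<in>UNIV. pol s a)"
    using assms(1) by (subst sum.swap) (simp add: is_mdp_def flip: sum_distrib_left)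
  then show "(\<Sum>s'\<in>UNIV. \<Sum>a\<in>UNIV. pol s a * P s a s') = 1"
    using assms(2) by (simp add: is_policy_def)
qed

lemma P_pol_abs_le:
  "is_mdp P \<Longrightarrow> is_policy pol \<Longrightarrow> (\<And>x. \<bar>V x\<bar> \<le> c) \<Longrightarrow> \<bar>P_pol P pol V s\<bar> \<le> c"
  unfolding P_pol_def by (rule prob_vector_sum_abs_le[OF prob_vector_P_pol_row])

definition det_pol :: "('s \<Rightarrow> 'a) \<Rightarrow> 's \<Rightarrow> 'a \<Rightarrow> real" where
  "det_pol f s b = (if b = f s then 1 else 0)"

lemma deterministic_policies_eq_range: "deterministic_policies = range det_pol"
proof (intro equalityI subsetI)
  fix pol :: "'a \<Rightarrow> 'b \<Rightarrow> real"
  assume "pol \<in> deterministic_policies"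
  then have "\<forall>s. \<exists>a. \<forall>b. pol s b = (if b = a then 1 else 0)"
    unfolding deterministic_policies_def by blast
  then obtain f where "\<forall>s b. pol s b = (if b = f s then 1 else 0)"
    using choice[of "\<lambda>s a. \<forall>b. pol s b = (if b = a then 1 else 0)"] by blast
  then have "pol = det_pol f" by (simp add: fun_eq_iff det_pol_def)
  then show "pol \<in> range det_pol" by blast
qed (auto simp: deterministic_policies_def det_pol_def)

lemma finite_deterministic_policies:
  "finite (deterministic_policies :: ('s::finite \<Rightarrow> 'a::finite \<Rightarrow> real) set)"
  unfolding deterministic_policies_eq_range by simp

lemma is_policy_det_pol: "is_policy (det_pol (f :: 's::finite \<Rightarrow> 'a::finite))"
  unfolding is_policy_def det_pol_def by (simp add: sum.delta')

lemma P_pol_det_pol: "P_pol P (det_pol f) V s = P_sa P s (f s) V"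
proof -
  have "(\<Sum>b\<in>UNIV. det_pol f s b * P_sa P s b V)
      = (\<Sum>b\<in>UNIV. if b = f s then P_sa P s b V else 0)"
    unfolding det_pol_def by (rule sum.cong) auto
  then show ?thesis unfolding P_pol_eq_sum_P_sa by simp
qed

lemma bellman_T_ge: "r s a + P_sa P s a V \<le> bellman_T P r V s"
  unfolding bellman_T_def P_sa_def by (rule Max_ge) auto

lemma bellman_T_attained:
  obtains a where "bellman_T P r V s = r s a + P_sa P s a V"
proof -
  have "bellman_T P r V s \<in> range (\<lambda>a. r s a + P_sa P s a V)"
    unfolding bellman_T_def P_sa_def by (rule Max_in) auto
  then show ?thesis using that by blast
qed

lemma T_pol_le_bellman_T: "is_policy pol \<Longrightarrow> T_pol P r pol V s \<le> bellman_T P r V s"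
  unfolding T_pol_eq_sum by (rule prob_vector_sum_le[OF is_policy_prob_vector bellman_T_ge])

lemma greedy_policy_support:
  assumes "is_policy pol" and "T_pol P r pol V s = bellman_T P r V s" and "pol s a \<noteq> 0"
  shows "bellman_T P r V s = r s a + P_sa P s a V"
proof -
  let ?loss = "\<lambda>b. bellman_T P r V s - (r s b + P_sa P s b V)"
  have nonneg: "0 \<le> pol s b * ?loss b" for b
    using assms(1) bellman_T_ge[of r s b P V] by (simp add: is_policy_def)
  have "(\<Sum>b\<in>UNIV. pol s b * ?loss b) = bellman_T P r V s - T_pol P r pol V s"
    using assms(1)
    by (simp add: T_pol_eq_sum right_diff_distrib sum_subtractf is_policy_def flip: sum_distrib_right)
  then have "pol s a * ?loss a = 0"
    using assms(2) nonneg by (simp add: sum_nonneg_eq_0_iff)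
  then show ?thesis using assms(3) by simp
qed

lemma bellman_T_diff_le:
  assumes "bellman_T P r V s = r s a + P_sa P s a V"
  shows "bellman_T P r V s - bellman_T P r W s \<le> P_sa P s a (\<lambda>x. V x - W x)"
  using bellman_T_ge[of r s a P W] assms by (simp add: P_sa_diff)

lemma bellman_T_diff_ge:
  assumes "bellman_T P r W s = r s b + P_sa P s b W"
  shows "P_sa P s b (\<lambda>x. V x - W x) \<le> bellman_T P r V s - bellman_T P r W s"
  using bellman_T_ge[of r s b P V] assms by (simp add: P_sa_diff)

lemma bellman_T_diff_lower_bound:
  assumes "is_mdp P" and "\<And>x. c \<le> V x - W x"
  shows "c \<le> bellman_T P r V s - bellman_T P r W s"
proof -
  obtain b where "bellman_T P r W s = r s b + P_sa P s b W" by (rule bellman_T_attained)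
  from bellman_T_diff_ge[OF this] show ?thesis
    using P_sa_ge[OF assms] by (rule order_trans[rotated])
qed

lemma bellman_T_nonexpansive:
  assumes "is_mdp P" and "\<And>x. \<bar>V x - W x\<bar> \<le> c"
  shows "\<bar>bellman_T P r V s - bellman_T P r W s\<bar> \<le> c"
proof -
  have "- c \<le> V x - W x" and "- c \<le> W x - V x" for x
    using assms(2)[of x] by (simp_all add: abs_le_iff)
  then have "- c \<le> bellman_T P r V s - bellman_T P r W s"
    and "- c \<le> bellman_T P r W s - bellman_T P r V s"
    by (metis bellman_T_diff_lower_bound[OF assms(1)])+
  then show ?thesis by linarith
qed

lemma funpow_P_pol_add:
  "(P_pol P pol ^^ t) (\<lambda>x. V x + W x) = (\<lambda>s. (P_pol P pol ^^ t) V s + (P_pol P pol ^^ t) W s)"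
  by (induction t) (simp_all add: P_pol_add)

lemma funpow_P_pol_diff:
  "(P_pol P pol ^^ t) (\<lambda>x. V x - W x) = (\<lambda>s. (P_pol P pol ^^ t) V s - (P_pol P pol ^^ t) W s)"
  by (induction t) (simp_all add: P_pol_diff)

lemma funpow_P_pol_abs_le:
  assumes "is_mdp P" and "is_policy pol" and "\<And>x. \<bar>V x\<bar> \<le> c"
  shows "\<bar>(P_pol P pol ^^ t) V s\<bar> \<le> c"
  using assms(3) by (induction t arbitrary: s) (simp_all add: P_pol_abs_le[OF assms(1,2)])

lemma abs_sum_lessThan_le: "(\<And>t. \<bar>f t\<bar> \<le> c) \<Longrightarrow> \<bar>\<Sum>t<n. f t\<bar> \<le> real n * (c :: real)"
  using order_trans[OF sum_abs sum_mono[of "{..<n}" "\<lambda>t. \<bar>f t\<bar>" "\<lambda>_. c"]] by simp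

lemma cesaro_average_near:
  assumes mdp: "is_mdp P" and pol: "is_policy pol" and g_fixed: "P_pol P pol g = g"
    and near: "\<And>x. \<bar>T_pol P r pol V x - V x - g x\<bar> \<le> E" and "0 < n"
  shows "\<bar>1 / real n * (\<Sum>t<n. (P_pol P pol ^^ t) (r_pol r pol) s) - g s\<bar>
           \<le> E + 2 * sup_norm V / real n"
proof -
  let ?Q = "P_pol P pol"
  define e where "e x = T_pol P r pol V x - V x - g x" for x
  have r_pol_eq: "r_pol r pol = (\<lambda>x. (V x + g x + e x) - ?Q V x)"
    by (auto simp: e_def T_pol_def)
  have Q_g: "(?Q ^^ t) g = g" for t
    by (induction t) (simp_all add: g_fixed)
  have "(?Q ^^ t) (r_pol r pol) s = ((?Q ^^ t) V s - (?Q ^^ Suc t) V s) + g s + (?Q ^^ t) e s" for t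
    by (simp add: r_pol_eq funpow_P_pol_add funpow_P_pol_diff Q_g funpow_Suc_right
        del: funpow.simps)
  then have "(\<Sum>t<n. (?Q ^^ t) (r_pol r pol) s)
      = (\<Sum>t<n. (?Q ^^ t) V s - (?Q ^^ Suc t) V s) + real n * g s + (\<Sum>t<n. (?Q ^^ t) e s)"
    by (simp add: sum.distrib)
  also have "(\<Sum>t<n. (?Q ^^ t) V s - (?Q ^^ Suc t) V s) = V s - (?Q ^^ n) V s"
    using sum_lessThan_telescope'[of "\<lambda>t. (?Q ^^ t) V s" n] by simp
  finally have sum_eq: "(\<Sum>t<n. (?Q ^^ t) (r_pol r pol) s)
      = (V s - (?Q ^^ n) V s) + real n * g s + (\<Sum>t<n. (?Q ^^ t) e s)" .
  have "\<bar>(?Q ^^ n) V s\<bar> \<le> sup_norm V"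
    by (rule funpow_P_pol_abs_le[OF mdp pol abs_le_sup_norm])
  then have "\<bar>V s - (?Q ^^ n) V s\<bar> \<le> 2 * sup_norm V"
    using abs_le_sup_norm[of V s] by linarith
  moreover have "\<bar>\<Sum>t<n. (?Q ^^ t) e s\<bar> \<le> real n * E"
    by (intro abs_sum_lessThan_le funpow_P_pol_abs_le[OF mdp pol]) (simp add: e_def near)
  ultimately have "\<bar>V s - (?Q ^^ n) V s + (\<Sum>t<n. (?Q ^^ t) e s)\<bar> / real n
      \<le> (2 * sup_norm V + real n * E) / real n"
    by (intro divide_right_mono) linarith+
  also have "\<dots> = E + 2 * sup_norm V / real n"
    using \<open>0 < n\<close> by (simp add: field_simps)
  finally show ?thesis
    using \<open>0 < n\<close> by (simp add: sum_eq field_simps)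
qed

lemma real_of_liminf_near:
  fixes a b :: "nat \<Rightarrow> real"
  assumes "b \<longlonglongrightarrow> 0" and "eventually (\<lambda>n. \<bar>a n - c\<bar> \<le> E + b n) sequentially"
  shows "\<bar>real_of_ereal (liminf (\<lambda>n. ereal (a n))) - c\<bar> \<le> E"
proof -
  have "(\<lambda>n. ereal (c - E - b n)) \<longlonglongrightarrow> ereal (c - E)"
    and "(\<lambda>n. ereal (c + E + b n)) \<longlonglongrightarrow> ereal (c + E)"
    using assms(1) by (auto intro!: tendsto_eq_intros)
  moreover have "eventually (\<lambda>n. ereal (c - E - b n) \<le> ereal (a n)) sequentially"
    and "eventually (\<lambda>n. ereal (a n) \<le> ereal (c + E + b n)) sequentially"
    using assms(2) by (auto elim: eventually_mono simp: abs_le_iff)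
  ultimately have "ereal (c - E) \<le> liminf (\<lambda>n. ereal (a n))"
    and "liminf (\<lambda>n. ereal (a n)) \<le> ereal (c + E)"
    by (metis Liminf_mono lim_imp_Liminf trivial_limit_sequentially)+
  then show ?thesis
    by (cases "liminf (\<lambda>n. ereal (a n))") auto
qed

lemma gain_near:
  assumes "is_mdp P" and "is_policy pol" and "P_pol P pol g = g"
    and "\<And>x. \<bar>T_pol P r pol V x - V x - g x\<bar> \<le> E"
  shows "\<bar>gain P r pol s - g s\<bar> \<le> E"
  unfolding gain_def
proof (rule real_of_liminf_near)
  show "(\<lambda>n. 2 * sup_norm V / real n) \<longlonglongrightarrow> 0" by (rule lim_const_over_n)
  show "\<forall>\<^sub>F n in sequentially. \<bar>1 / real n * (\<Sum>t<n. (P_pol P pol ^^ t) (r_pol r pol) s) - g s\<bar>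
          \<le> E + 2 * sup_norm V / real n"
    using eventually_gt_at_top[of 0] by eventually_elim (rule cesaro_average_near[OF assms])
qed

lemma gain_abs_le_reward_norm:
  assumes "is_mdp P" and "is_policy pol"
  shows "\<bar>gain P r pol s\<bar> \<le> reward_norm r"
proof -
  have "\<bar>r_pol r pol x\<bar> \<le> reward_norm r" for x
    unfolding r_pol_def by (rule prob_vector_sum_abs_le[OF is_policy_prob_vector[OF assms(2)]])
      (rule abs_le_reward_norm)
  then have "\<bar>(P_pol P pol ^^ t) (r_pol r pol) s\<bar> \<le> reward_norm r" for t
    by (rule funpow_P_pol_abs_le[OF assms])
  then have "\<bar>\<Sum>t<n. (P_pol P pol ^^ t) (r_pol r pol) s\<bar> \<le> real n * reward_norm r" for n
    by (rule abs_sum_lessThan_le)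
  then have "\<bar>1 / real n * (\<Sum>t<n. (P_pol P pol ^^ t) (r_pol r pol) s) - 0\<bar> \<le> reward_norm r + 0"
    if "0 < n" for n
    using that by (simp add: abs_mult field_simps)
  then have "\<bar>gain P r pol s - 0\<bar> \<le> reward_norm r"
    unfolding gain_def
    by (intro real_of_liminf_near[where b = "\<lambda>_. 0"])
      (auto intro: eventually_mono[OF eventually_gt_at_top[of 0]])
  then show ?thesis by simp
qed

lemma abs_convex_bound_le:
  fixes x y a u :: real
  assumes "\<bar>x\<bar> \<le> a" and "\<bar>y\<bar> \<le> a" and "0 \<le> u" and "u \<le> 1"
  shows "\<bar>u * x + (1 - u) * y\<bar> \<le> a"
proof -
  have "\<bar>u * x + (1 - u) * y\<bar> \<le> u * \<bar>x\<bar> + (1 - u) * \<bar>y\<bar>"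
    using assms(3,4) abs_triangle_ineq[of "u * x" "(1 - u) * y"] by (simp add: abs_mult)
  also have "\<dots> \<le> u * a + (1 - u) * a"
    using assms by (intro add_mono mult_left_mono) auto
  finally show ?thesis by (simp add: algebra_simps)
qed

(* Bound on ||V^(k+1) - V^k - g/3||; C pays for the iterations before greedy actions preserve g. *)
definition diff_bound :: "real \<Rightarrow> real \<Rightarrow> nat \<Rightarrow> real" where
  "diff_bound D C k = (4 * D * (real k + 1) + C) / ((real k + 2) * (real k + 3))"

lemma diff_bound_Suc:
  "2 / ((real k + 3) * (real k + 4)) * (2 * D) + (real k + 2) / (real k + 4) * diff_bound D C k
   = diff_bound D C (Suc k)"
proof -
  have "real k + 2 > 0" "real k + 3 > 0" "real k + 4 > 0" by linarith+
  then show ?thesis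
    unfolding diff_bound_def by (simp add: divide_simps) (simp add: algebra_simps)
qed

lemma diff_bound_residual_le:
  assumes "0 \<le> D"
  shows "(diff_bound D C k + 2 / (real k + 3) * (2 * D)) / ((real k + 1) / (real k + 3))
         \<le> 8 / (real k + 1) * D + C / ((real k + 1) * (real k + 2))"
proof -
  have pos: "real k + 1 > 0" "real k + 2 > 0" "real k + 3 > 0" by linarith+
  then have "(diff_bound D C k + 2 / (real k + 3) * (2 * D)) / ((real k + 1) / (real k + 3))
      = 4 * D / (real k + 2) + 4 * D / (real k + 1) + C / ((real k + 1) * (real k + 2))"
    unfolding diff_bound_def by (simp add: divide_simps)
  also have "4 * D / (real k + 2) \<le> 4 * D / (real k + 1)"
    using assms pos by (intro divide_left_mono) auto
  finally show ?thesis by simp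
qed

lemma late_index_bounds:
  fixes x K G :: real
  assumes "0 \<le> x" and "0 \<le> G" and "2 * x + 3 \<le> K" and "K < real k"
  defines "j \<equiv> nat \<lfloor>x\<rfloor> + 1"
  shows "x < real j" and "j \<le> k"
    and "2 * G / 3 * ((real j + 2) * (real j + 3)) / ((real k + 1) * (real k + 2))
           \<le> K / (real k + 1) * G"
proof -
  show j: "x < real j" unfolding j_def using assms(1) by linarith
  have j': "real j \<le> x + 1" unfolding j_def using assms(1) by linarith
  then show "j \<le> k" using assms(1,3,4) by linarith
  have "(real j + 2) * (real j + 3) \<le> (x + 3) * (x + 4)"
    using j' by (intro mult_mono) auto
  moreover have "(2 * x + 3) * (2 * x + 5) \<le> K * (real k + 2)"
    using assms(1,3,4) by (intro mult_mono) auto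
  moreover have "(x + 3) * (x + 4) = x * x + 7 * x + 12"
    and "(2 * x + 3) * (2 * x + 5) = 4 * (x * x) + 16 * x + 15"
    by (simp_all add: algebra_simps)
  moreover have "0 \<le> x * x" by simp
  ultimately have "2 / 3 * ((real j + 2) * (real j + 3)) \<le> K * (real k + 2)"
    using assms(1) by linarith
  from mult_left_mono[OF this assms(2)]
  have "2 * G / 3 * ((real j + 2) * (real j + 3)) \<le> G * (K * (real k + 2))"
    by simp
  then have "2 * G / 3 * ((real j + 2) * (real j + 3)) / ((real k + 1) * (real k + 2))
      \<le> G * (K * (real k + 2)) / ((real k + 1) * (real k + 2))"
    by (intro divide_right_mono) auto
  also have "\<dots> = K / (real k + 1) * G"
    by (simp add: divide_simps add_pos_pos)
  finally show "2 * G / 3 * ((real j + 2) * (real j + 3)) / ((real k + 1) * (real k + 2))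
      \<le> K / (real k + 1) * G" .
qed

locale anchored_value_iteration =
  fixes P :: "'s::finite \<Rightarrow> 'a::finite \<Rightarrow> 's \<Rightarrow> real"
    and r :: "'s \<Rightarrow> 'a \<Rightarrow> real"
    and g h V0 :: "'s \<Rightarrow> real"
  assumes mdp: "is_mdp P" and sol: "modified_bellman P r g h"
begin

abbreviation "V k \<equiv> anchored_VI P r V0 k"
abbreviation "TV k \<equiv> bellman_T P r (V k)"
abbreviation "D \<equiv> sup_norm (\<lambda>s. V0 s - h s)"
abbreviation "G \<equiv> sup_norm g"

lemma g_eq_Max_P_sa: "g s = Max (range (\<lambda>a. P_sa P s a g))"
  using sol by (simp add: modified_bellman_def P_sa_def)

lemma P_sa_g_le: "P_sa P s a g \<le> g s"
  unfolding g_eq_Max_P_sa[of s] by (rule Max_ge) auto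

lemma P_sa_g_attained: "\<exists>b. P_sa P s b g = g s"
proof -
  have "Max (range (\<lambda>a. P_sa P s a g)) \<in> range (\<lambda>a. P_sa P s a g)"
    by (rule Max_in) auto
  then show ?thesis unfolding g_eq_Max_P_sa[of s, symmetric] by auto
qed

lemma h_bellman_le: "r s a + P_sa P s a h \<le> h s + g s"
  using bellman_T_ge[of r s a P h] sol by (simp add: modified_bellman_def)

lemma optimal_policy:
  obtains ps where "is_policy ps" and "P_pol P ps g = g" and "\<And>s. T_pol P r ps h s = h s + g s"
  using sol unfolding modified_bellman_def by (metis ext)

lemma sup_norm_g_le_reward_norm: "G \<le> reward_norm r"
proof (rule sup_norm_le)
  fix s
  obtain ps where ps: "is_policy ps" "P_pol P ps g = g" "\<And>s. T_pol P r ps h s = h s + g s"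
    using optimal_policy by blast
  have "\<bar>gain P r ps s - g s\<bar> \<le> 0"
    by (rule gain_near[OF mdp ps(1,2), where V = h]) (simp add: ps(3))
  then show "\<bar>g s\<bar> \<le> reward_norm r"
    using gain_abs_le_reward_norm[OF mdp ps(1), of r s] by simp
qed

lemma bellman_T_h_plus_g:
  assumes "0 \<le> c"
  shows "bellman_T P r (\<lambda>x. h x + c * g x) s = h s + (c + 1) * g s"
proof (rule antisym)
  obtain a
    where a: "bellman_T P r (\<lambda>x. h x + c * g x) s = r s a + P_sa P s a (\<lambda>x. h x + c * g x)"
    by (rule bellman_T_attained)
  have "c * P_sa P s a g \<le> c * g s"
    using P_sa_g_le assms by (rule mult_left_mono)
  then show "bellman_T P r (\<lambda>x. h x + c * g x) s \<le> h s + (c + 1) * g s"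
    using a h_bellman_le[of s a] by (simp add: P_sa_add P_sa_cmult algebra_simps)
next
  obtain ps where ps: "is_policy ps" "P_pol P ps g = g" "\<And>s. T_pol P r ps h s = h s + g s"
    using optimal_policy by blast
  have "T_pol P r ps (\<lambda>x. h x + c * g x) s = T_pol P r ps h s + c * P_pol P ps g s"
    by (simp add: T_pol_def P_pol_add P_pol_cmult)
  then show "h s + (c + 1) * g s \<le> bellman_T P r (\<lambda>x. h x + c * g x) s"
    using T_pol_le_bellman_T[OF ps(1), of P r "\<lambda>x. h x + c * g x" s] ps(2,3)
    by (simp add: algebra_simps)
qed

lemma bellman_T_near_h_plus_g:
  assumes "0 \<le> c" and "\<And>x. \<bar>W x - h x - c * g x\<bar> \<le> e"
  shows "\<bar>bellman_T P r W s - h s - (c + 1) * g s\<bar> \<le> e"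
  using bellman_T_nonexpansive[OF mdp, of W "\<lambda>x. h x + c * g x" e r s] assms
  by (simp add: bellman_T_h_plus_g diff_diff_eq)

lemma anchored_VI_Suc_eq:
  "V (Suc k) s = 2 / (real k + 3) * V0 s + (real k + 1) / (real k + 3) * TV k s"
proof -
  have "1 - 2 / (real k + 3) = (real k + 1) / (real k + 3)"
    by (simp add: field_simps)
  then show ?thesis by (simp add: add.commute[of 1] add.assoc)
qed

lemma V_near_h_plus_g: "\<bar>V k s - h s - real k / 3 * g s\<bar> \<le> D"
proof (induction k arbitrary: s)
  case 0
  show ?case using abs_le_sup_norm[of "\<lambda>s. V0 s - h s" s] by simp
next
  case (Suc k)
  have TV: "\<bar>TV k s - h s - (real k / 3 + 1) * g s\<bar> \<le> D"
    by (rule bellman_T_near_h_plus_g[OF _ Suc.IH]) simp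
  have V0: "\<bar>V0 s - h s\<bar> \<le> D"
    using abs_le_sup_norm[of "\<lambda>s. V0 s - h s" s] by simp
  define l where "l = 2 / (real k + 3)"
  have "V (Suc k) s - h s - real (Suc k) / 3 * g s
      = l * (V0 s - h s) + (1 - l) * (TV k s - h s - (real k / 3 + 1) * g s)"
    unfolding l_def by (simp add: anchored_VI_Suc_eq divide_simps) (simp add: algebra_simps)
  also have "\<bar>\<dots>\<bar> \<le> D"
    by (rule abs_convex_bound_le[OF V0 TV]) (simp_all add: l_def)
  finally show ?case .
qed

lemma TV_near_h_plus_g: "\<bar>TV k s - h s - (real k / 3 + 1) * g s\<bar> \<le> D"
  by (rule bellman_T_near_h_plus_g[OF _ V_near_h_plus_g]) simp

lemma TV_near_V0: "\<bar>TV k s - V0 s - (real k + 3) * (g s / 3)\<bar> \<le> 2 * D"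
proof -
  have "(real k + 3) * (g s / 3) = (real k / 3 + 1) * g s"
    by (simp add: field_simps)
  then show ?thesis
    using TV_near_h_plus_g[of k s] abs_le_sup_norm[of "\<lambda>s. V0 s - h s" s]
    unfolding abs_le_iff by linarith
qed

lemma greedy_violation_le:
  assumes "TV j s = r s a + P_sa P s a (V j)"
  shows "real j * (g s - P_sa P s a g) \<le> 6 * D"
proof -
  have "P_sa P s a (\<lambda>x. V j x - (h x + real j / 3 * g x)) \<le> D"
    using V_near_h_plus_g by (intro P_sa_le[OF mdp]) (simp add: abs_le_iff algebra_simps)
  moreover have "P_sa P s a (\<lambda>x. V j x - (h x + real j / 3 * g x))
      = P_sa P s a (V j) - (P_sa P s a h + real j / 3 * P_sa P s a g)"
    by (simp only: P_sa_diff P_sa_add P_sa_cmult)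
  ultimately have "TV j s \<le> r s a + P_sa P s a h + real j / 3 * P_sa P s a g + D"
    using assms by simp
  then show ?thesis
    using TV_near_h_plus_g[of j s] h_bellman_le[of s a] by (simp add: abs_le_iff algebra_simps)
qed

lemma gap_eps_le_violation:
  assumes "P_sa P s a g \<noteq> g s"
  shows "gap_eps P g \<le> ereal (g s - P_sa P s a g)"
proof -
  define f where "f t = (if t = s then a else (SOME b. P_sa P t b g = g t))" for t
  have f_other: "P_sa P t (f t) g = g t" if "t \<noteq> s" for t
    using that someI_ex[OF P_sa_g_attained] by (simp add: f_def)
  have "det_pol f \<in> {pol \<in> deterministic_policies. P_pol P pol g \<noteq> g}"
    using assms by (auto simp: deterministic_policies_eq_range P_pol_det_pol f_def fun_eq_iff)
  then have "gap_eps P g \<le> ereal (sup_norm (\<lambda>t. P_pol P (det_pol f) g t - g t))"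
    unfolding gap_eps_def by (rule INF_lower)
  also have "sup_norm (\<lambda>t. P_pol P (det_pol f) g t - g t) \<le> g s - P_sa P s a g"
    using P_sa_g_le[of s a] f_other by (intro sup_norm_le) (auto simp: P_pol_det_pol f_def)
  finally show ?thesis by simp
qed

lemma gap_eps_cases:
  obtains (infinite) "gap_eps P g = \<infinity>"
  | (finite) eps where "gap_eps P g = ereal eps" and "0 < eps" and "eps \<le> 2 * G"
proof -
  let ?S = "{pol \<in> deterministic_policies. P_pol P pol g \<noteq> g}"
  let ?gap = "\<lambda>pol. ereal (sup_norm (\<lambda>s. P_pol P pol g s - g s))"
  show ?thesis
  proof (cases "?S = {}")
    case True
    then show ?thesis using infinite unfolding gap_eps_def True by (simp add: top_ereal_def)
  next
    case False
    have "finite ?S"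
      using finite_deterministic_policies by (rule finite_subset[rotated]) blast
    then have "gap_eps P g = Min (?gap ` ?S)"
      unfolding gap_eps_def using False by (intro cInf_eq_Min) auto
    moreover have "Min (?gap ` ?S) \<in> ?gap ` ?S"
      using False \<open>finite ?S\<close> by (intro Min_in) auto
    ultimately obtain d where d: "d \<in> ?S" "gap_eps P g = ?gap d" by auto
    then obtain t where "P_pol P d g t \<noteq> g t" by auto
    then have "0 < sup_norm (\<lambda>s. P_pol P d g s - g s)"
      using abs_le_sup_norm[of "\<lambda>s. P_pol P d g s - g s" t] by simp
    moreover have "sup_norm (\<lambda>s. P_pol P d g s - g s) \<le> 2 * G"
    proof (rule sup_norm_le)
      fix s
      have "is_policy d"
        using d(1) by (auto simp: deterministic_policies_eq_range is_policy_det_pol)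
      then have "\<bar>P_pol P d g s\<bar> \<le> G"
        by (rule P_pol_abs_le[OF mdp _ abs_le_sup_norm])
      then show "\<bar>P_pol P d g s - g s\<bar> \<le> 2 * G"
        using abs_le_sup_norm[of g s] by simp
    qed
    ultimately show ?thesis using finite d(2) by blast
  qed
qed

definition greedy_keeps_g :: "('s \<Rightarrow> real) \<Rightarrow> bool" where
  "greedy_keeps_g W \<longleftrightarrow>
     (\<forall>s a. bellman_T P r W s = r s a + P_sa P s a W \<longrightarrow> P_sa P s a g = g s)"

lemma greedy_keeps_g_late:
  assumes "\<And>eps. gap_eps P g = ereal eps \<Longrightarrow> 6 * D < real j * eps"
  shows "greedy_keeps_g (V j)"
  unfolding greedy_keeps_g_def
proof (intro allI impI, rule ccontr)
  fix s a
  assume greedy: "TV j s = r s a + P_sa P s a (V j)" and "P_sa P s a g \<noteq> g s"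
  then have le: "gap_eps P g \<le> ereal (g s - P_sa P s a g)"
    by (intro gap_eps_le_violation)
  show False
  proof (cases rule: gap_eps_cases)
    case infinite
    then show False using le by simp
  next
    case (finite eps)
    then have "real j * eps \<le> real j * (g s - P_sa P s a g)"
      using le by (intro mult_left_mono) auto
    then show False
      using assms[OF finite(1)] greedy_violation_le[OF greedy] by linarith
  qed
qed

lemma greedy_policy_fixes_g:
  assumes "greedy_keeps_g W" and "is_policy pol" and "T_pol P r pol W = bellman_T P r W"
  shows "P_pol P pol g = g"
proof
  fix s
  have weighted: "pol s a * P_sa P s a g = pol s a * g s" for a
    using greedy_policy_support[OF assms(2), of P r W s a] assms(1,3)
    unfolding greedy_keeps_g_def by (cases "pol s a = 0") auto
  have "P_pol P pol g s = (\<Sum>a\<in>UNIV. pol s a * g s)"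
    unfolding P_pol_eq_sum_P_sa using weighted by (rule sum.cong[OF refl])
  also have "\<dots> = g s"
    using assms(2) by (simp add: is_policy_def flip: sum_distrib_right)
  finally show "P_pol P pol g s = g s" .
qed

lemma bellman_T_diff_upper:
  assumes "0 \<le> t" and "\<And>x. W' x - W x - t * g x \<le> c"
  shows "bellman_T P r W' s - bellman_T P r W s - t * g s \<le> c"
proof -
  obtain a where a: "bellman_T P r W' s = r s a + P_sa P s a W'"
    by (rule bellman_T_attained)
  have "P_sa P s a (\<lambda>x. W' x - W x - t * g x) \<le> c"
    by (rule P_sa_le[OF mdp assms(2)])
  moreover have "t * P_sa P s a g \<le> t * g s"
    by (rule mult_left_mono[OF P_sa_g_le assms(1)])
  ultimately show ?thesis
    using bellman_T_diff_le[OF a, of W] by (simp add: P_sa_diff P_sa_cmult)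
qed

lemma bellman_T_diff_lower:
  assumes "greedy_keeps_g W" and "\<And>x. c \<le> W' x - W x - t * g x"
  shows "c \<le> bellman_T P r W' s - bellman_T P r W s - t * g s"
proof -
  obtain b where b: "bellman_T P r W s = r s b + P_sa P s b W"
    by (rule bellman_T_attained)
  then have "P_sa P s b g = g s"
    using assms(1) unfolding greedy_keeps_g_def by blast
  moreover have "c \<le> P_sa P s b (\<lambda>x. W' x - W x - t * g x)"
    by (rule P_sa_ge[OF mdp assms(2)])
  ultimately show ?thesis
    using bellman_T_diff_ge[OF b, of W'] by (simp add: P_sa_diff P_sa_cmult)
qed

lemma anchored_VI_diff_Suc:
  "V (Suc (Suc k)) s - V (Suc k) s - c
   = 2 / ((real k + 3) * (real k + 4)) * (TV k s - V0 s - (real k + 3) * c)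
     + (real k + 2) / (real k + 4) * (TV (Suc k) s - TV k s - c)"
proof -
  have "real k + 3 > 0" "real k + 4 > 0" by linarith+
  then show ?thesis
    using anchored_VI_Suc_eq[of k s] anchored_VI_Suc_eq[of "Suc k" s]
    by (simp add: divide_simps) (simp add: algebra_simps)
qed

lemma diff_0_abs_le: "\<bar>V (Suc 0) s - V 0 s - g s / 3\<bar> \<le> diff_bound D 0 0"
proof -
  have eq: "V (Suc 0) s - V 0 s - g s / 3 = (TV 0 s - V0 s - (real 0 + 3) * (g s / 3)) / 3"
    using anchored_VI_Suc_eq[of 0 s] by simp
  show ?thesis
    unfolding eq abs_divide using TV_near_V0[of 0 s] by (simp add: diff_bound_def)
qed

lemma anchored_VI_diff_Suc_le:
  assumes "TV k s - V0 s - (real k + 3) * c \<le> 2 * e"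
    and "TV (Suc k) s - TV k s - c \<le> diff_bound e C k"
  shows "V (Suc (Suc k)) s - V (Suc k) s - c \<le> diff_bound e C (Suc k)"
  unfolding anchored_VI_diff_Suc diff_bound_Suc[symmetric]
  using assms by (intro add_mono mult_left_mono) auto

lemma anchored_VI_diff_Suc_ge:
  assumes "- (2 * e) \<le> TV k s - V0 s - (real k + 3) * c"
    and "- diff_bound e C k \<le> TV (Suc k) s - TV k s - c"
  shows "- diff_bound e C (Suc k) \<le> V (Suc (Suc k)) s - V (Suc k) s - c"
proof -
  have "2 / ((real k + 3) * (real k + 4)) * - (2 * e)
        + (real k + 2) / (real k + 4) * - diff_bound e C k
      \<le> V (Suc (Suc k)) s - V (Suc k) s - c"
    unfolding anchored_VI_diff_Suc using assms by (intro add_mono mult_left_mono) auto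
  then show ?thesis
    unfolding diff_bound_Suc[symmetric] by simp
qed

lemma diff_upper_from:
  assumes start: "\<And>x. V (Suc j0) x - V j0 x - g x / 3 \<le> diff_bound D C j0" and "j0 \<le> m"
  shows "V (Suc m) s - V m s - g s / 3 \<le> diff_bound D C m"
  using \<open>j0 \<le> m\<close>
proof (induction m arbitrary: s rule: dec_induct)
  case base
  then show ?case by (rule start)
next
  case (step k)
  have "TV (Suc k) s - TV k s - 1 / 3 * g s \<le> diff_bound D C k"
    by (rule bellman_T_diff_upper) (use step.IH in simp_all)
  moreover have "TV k s - V0 s - (real k + 3) * (g s / 3) \<le> 2 * D"
    using TV_near_V0[of k s] by (simp add: abs_le_iff)
  ultimately show ?case
    by (intro anchored_VI_diff_Suc_le) simp_all
qed

lemma diff_lower_from: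
  assumes keeps: "\<And>j. j0 \<le> j \<Longrightarrow> greedy_keeps_g (V j)"
    and start: "\<And>x. - diff_bound D C j0 \<le> V (Suc j0) x - V j0 x - g x / 3" and "j0 \<le> m"
  shows "- diff_bound D C m \<le> V (Suc m) s - V m s - g s / 3"
  using \<open>j0 \<le> m\<close>
proof (induction m arbitrary: s rule: dec_induct)
  case base
  then show ?case by (rule start)
next
  case (step k)
  have "- diff_bound D C k \<le> TV (Suc k) s - TV k s - 1 / 3 * g s"
    by (rule bellman_T_diff_lower[OF keeps[OF step.hyps(1)]]) (use step.IH in simp)
  moreover have "- (2 * D) \<le> TV k s - V0 s - (real k + 3) * (g s / 3)"
    using TV_near_V0[of k s] by (simp add: abs_le_iff)
  ultimately show ?case
    by (intro anchored_VI_diff_Suc_ge) simp_all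
qed

lemma diff_lower_crude: "- diff_bound D 0 k \<le> V (Suc k) s - V k s + G / 3"
proof (induction k arbitrary: s)
  case 0
  show ?case
    using diff_0_abs_le[of s] abs_le_sup_norm[of g s] by (simp add: abs_le_iff)
next
  case (Suc k)
  have "- diff_bound D 0 k - G / 3 \<le> TV (Suc k) s - TV k s"
    by (rule bellman_T_diff_lower_bound[OF mdp]) (use Suc.IH in \<open>simp add: algebra_simps\<close>)
  then have Y: "- diff_bound D 0 k \<le> TV (Suc k) s - TV k s - - (G / 3)"
    by simp
  have "(real k + 3) * - (G / 3) \<le> (real k + 3) * (g s / 3)"
    using abs_le_sup_norm[of g s] by (intro mult_left_mono) auto
  then have X: "- (2 * D) \<le> TV k s - V0 s - (real k + 3) * - (G / 3)"
    using TV_near_V0[of k s] unfolding abs_le_iff by linarith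
  show ?case
    using anchored_VI_diff_Suc_ge[OF X Y] by simp
qed

lemma diff_abs_le_crude: "\<bar>V (Suc k) s - V k s - g s / 3\<bar> \<le> diff_bound D 0 k + 2 * G / 3"
proof (rule abs_leI)
  have "V (Suc 0) x - V 0 x - g x / 3 \<le> diff_bound D 0 0" for x
    using abs_le_D1[OF diff_0_abs_le] .
  then have "V (Suc k) s - V k s - g s / 3 \<le> diff_bound D 0 k"
    by (rule diff_upper_from) simp
  then show "V (Suc k) s - V k s - g s / 3 \<le> diff_bound D 0 k + 2 * G / 3"
    using sup_norm_nonneg[of g] by linarith
  show "- (V (Suc k) s - V k s - g s / 3) \<le> diff_bound D 0 k + 2 * G / 3"
    using diff_lower_crude[of k s] abs_le_sup_norm[of g s] by (simp add: abs_le_iff)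
qed

lemma residual_le_diff_bound:
  assumes "\<bar>V (Suc k) s - V k s - g s / 3\<bar> \<le> diff_bound D C k"
  shows "\<bar>TV k s - V k s - g s\<bar> \<le> 8 / (real k + 1) * D + C / ((real k + 1) * (real k + 2))"
proof -
  have pos: "real k + 1 > 0" "real k + 3 > 0" by linarith+
  have eq: "(real k + 1) / (real k + 3) * (TV k s - V k s - g s)
      = (V (Suc k) s - V k s - g s / 3) + 2 / (real k + 3) * (V k s - V0 s - real k / 3 * g s)"
    using pos by (simp add: anchored_VI_Suc_eq divide_simps) (simp add: algebra_simps)
  have w: "\<bar>V k s - V0 s - real k / 3 * g s\<bar> \<le> 2 * D"
    using V_near_h_plus_g[of k s] abs_le_sup_norm[of "\<lambda>s. V0 s - h s" s]
    by (simp add: abs_le_iff)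
  have "(real k + 1) / (real k + 3) * \<bar>TV k s - V k s - g s\<bar>
      = \<bar>(V (Suc k) s - V k s - g s / 3) + 2 / (real k + 3) * (V k s - V0 s - real k / 3 * g s)\<bar>"
    using pos by (simp only: eq[symmetric] abs_mult) simp
  also have "\<dots> \<le> \<bar>V (Suc k) s - V k s - g s / 3\<bar>
      + \<bar>2 / (real k + 3) * (V k s - V0 s - real k / 3 * g s)\<bar>"
    by (rule abs_triangle_ineq)
  also have "\<dots> \<le> diff_bound D C k + 2 / (real k + 3) * (2 * D)"
  proof (rule add_mono[OF assms])
    have nonneg: "0 \<le> 2 / (real k + 3)"
      using pos by simp
    from mult_left_mono[OF w nonneg]
    show "\<bar>2 / (real k + 3) * (V k s - V0 s - real k / 3 * g s)\<bar> \<le> 2 / (real k + 3) * (2 * D)"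
      by (simp only: abs_mult abs_of_nonneg[OF nonneg])
  qed
  finally have "(real k + 1) / (real k + 3) * \<bar>TV k s - V k s - g s\<bar>
      \<le> diff_bound D C k + 2 / (real k + 3) * (2 * D)" .
  then have "\<bar>TV k s - V k s - g s\<bar> \<le> (diff_bound D C k + 2 / (real k + 3) * (2 * D))
      / ((real k + 1) / (real k + 3))"
    by (simp only: pos_le_divide_eq[OF divide_pos_pos[OF pos]] mult.commute)
  also have "\<dots> \<le> 8 / (real k + 1) * D + C / ((real k + 1) * (real k + 2))"
    by (rule diff_bound_residual_le[OF sup_norm_nonneg])
  finally show ?thesis .
qed

lemma residual_bound_from:
  assumes keeps: "\<And>j. j0 \<le> j \<Longrightarrow> greedy_keeps_g (V j)"
    and start: "\<And>x. \<bar>V (Suc j0) x - V j0 x - g x / 3\<bar> \<le> diff_bound D C j0" and "j0 \<le> k"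
  shows "\<bar>TV k s - V k s - g s\<bar> \<le> 8 / (real k + 1) * D + C / ((real k + 1) * (real k + 2))"
proof (intro residual_le_diff_bound abs_leI)
  show "V (Suc k) s - V k s - g s / 3 \<le> diff_bound D C k"
    using abs_le_D1[OF start] \<open>j0 \<le> k\<close> by (rule diff_upper_from)
  have "- diff_bound D C j0 \<le> V (Suc j0) x - V j0 x - g x / 3" for x
    using abs_le_D2[OF start[of x]] by linarith
  from keeps this \<open>j0 \<le> k\<close> have "- diff_bound D C k \<le> V (Suc k) s - V k s - g s / 3"
    by (rule diff_lower_from)
  then show "- (V (Suc k) s - V k s - g s / 3) \<le> diff_bound D C k"
    by linarith
qed

lemma residual_bound_infinite_gap:
  assumes "gap_eps P g = \<infinity>"
  shows "greedy_keeps_g (V k) \<and> (\<forall>s. \<bar>TV k s - V k s - g s\<bar> \<le> 8 / (real k + 1) * D)"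
proof -
  have keeps: "greedy_keeps_g (V j)" for j
    by (rule greedy_keeps_g_late) (simp add: assms)
  have "\<bar>TV k s - V k s - g s\<bar> \<le> 8 / (real k + 1) * D + 0 / ((real k + 1) * (real k + 2))" for s
    by (rule residual_bound_from[OF keeps diff_0_abs_le]) simp
  then show ?thesis
    using keeps by simp
qed

lemma residual_bound_finite_gap:
  fixes eps :: real
  defines "K \<equiv> (3 * reward_norm r + 12 * D + 3 * G) / eps"
  assumes gap: "gap_eps P g = ereal eps" and eps: "0 < eps" "eps \<le> 2 * G" and "K < real k"
  shows "greedy_keeps_g (V k)
    \<and> (\<forall>s. \<bar>TV k s - V k s - g s\<bar> \<le> 8 / (real k + 1) * D + K / (real k + 1) * G)"
proof -
  define x where "x = 6 * D / eps"
  define j0 where "j0 = nat \<lfloor>x\<rfloor> + 1"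
  define C where "C = 2 * G / 3 * ((real j0 + 2) * (real j0 + 3))"
  have x0: "0 \<le> x"
    unfolding x_def using eps sup_norm_nonneg[of "\<lambda>s. V0 s - h s"] by simp
  have K_ge: "2 * x + 3 \<le> K"
  proof -
    have "K = 2 * x + (3 * reward_norm r + 3 * G) / eps"
      unfolding K_def x_def using eps by (simp add: field_simps)
    moreover have "3 \<le> (3 * reward_norm r + 3 * G) / eps"
      using eps sup_norm_g_le_reward_norm by (simp add: le_divide_eq)
    ultimately show ?thesis by linarith
  qed
  note j0 = late_index_bounds[OF x0 sup_norm_nonneg[of g] K_ge \<open>K < real k\<close>, folded j0_def]
  have keeps: "greedy_keeps_g (V j)" if "j0 \<le> j" for j
  proof (rule greedy_keeps_g_late)
    fix eps' assume "gap_eps P g = ereal eps'"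
    then have "eps' = eps" using gap by simp
    moreover have "x < real j" using j0(1) that by linarith
    ultimately show "6 * D < real j * eps'"
      using eps unfolding x_def by (simp add: field_simps)
  qed
  have start: "\<bar>V (Suc j0) s - V j0 s - g s / 3\<bar> \<le> diff_bound D C j0" for s
    using diff_abs_le_crude[of j0 s] by (simp add: diff_bound_def C_def add_divide_distrib)
  have residual:
    "\<bar>TV k s - V k s - g s\<bar> \<le> 8 / (real k + 1) * D + C / ((real k + 1) * (real k + 2))" for s
    by (rule residual_bound_from[OF _ start j0(2)]) (rule keeps)
  have "\<bar>TV k s - V k s - g s\<bar> \<le> 8 / (real k + 1) * D + K / (real k + 1) * G" for s
    using residual[of s] j0(3) unfolding C_def by linarith
  then show ?thesis
    using keeps[OF j0(2)] by blast
qed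

end

theorem theorem2:
  fixes P :: "'s::finite \<Rightarrow> 'a::finite \<Rightarrow> 's \<Rightarrow> real"
    and r :: "'s \<Rightarrow> 'a \<Rightarrow> real"
    and g h V0 :: "'s \<Rightarrow> real"
    and pol :: "nat \<Rightarrow> 's \<Rightarrow> 'a \<Rightarrow> real"
    and K :: ereal and k :: nat
  assumes mdp: "is_mdp P"
    and sol: "modified_bellman P r g h"
    and greedy_pol: "\<And>k. is_policy (pol k)"
    and greedy: "\<And>k. T_pol P r (pol k) (anchored_VI P r V0 k) = bellman_T P r (anchored_VI P r V0 k)"
    and K_def: "K = ereal (3 * reward_norm r + 12 * sup_norm (\<lambda>s. V0 s - h s) + 3 * sup_norm g)
                    / gap_eps P g"
    and k_gt: "ereal (real k) > K"
  shows "sup_norm (\<lambda>s. g s - gain P r (pol k) s)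
           \<le> sup_norm (\<lambda>s. bellman_T P r (anchored_VI P r V0 k) s - anchored_VI P r V0 k s - g s)
       \<and> sup_norm (\<lambda>s. bellman_T P r (anchored_VI P r V0 k) s - anchored_VI P r V0 k s - g s)
           \<le> 8 / (real k + 1) * sup_norm (\<lambda>s. V0 s - h s)
             + real_of_ereal K / (real k + 1) * sup_norm g"
proof -
  interpret anchored_value_iteration P r g h V0
    using mdp sol by unfold_locales
  have residual: "greedy_keeps_g (V k) \<and> (\<forall>s. \<bar>TV k s - V k s - g s\<bar>
      \<le> 8 / (real k + 1) * D + real_of_ereal K / (real k + 1) * G)"
  proof (cases rule: gap_eps_cases)
    case infinite
    then show ?thesis
      using residual_bound_infinite_gap[OF infinite] K_def by simp
  next
    case (finite eps)
    then have "K = ereal ((3 * reward_norm r + 12 * D + 3 * G) / eps)"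
      using K_def by simp
    then show ?thesis
      using residual_bound_finite_gap[OF finite] k_gt by simp
  qed
  then have "P_pol P (pol k) g = g"
    using greedy_policy_fixes_g greedy_pol greedy by blast
  then have "\<bar>gain P r (pol k) s - g s\<bar> \<le> sup_norm (\<lambda>s. TV k s - V k s - g s)" for s
    by (rule gain_near[OF mdp greedy_pol, where V = "V k"])
      (simp add: greedy, rule abs_le_sup_norm[of "\<lambda>s. TV k s - V k s - g s"])
  then show ?thesis
    using residual by (auto intro!: sup_norm_le simp: abs_minus_commute)
qed

end
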